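(* Let $X$ be a topological space, $p=(p_1,\ldots,p_n):X\to\mathbb{R}^n$ a continuous function, and $(C^*_\sigma)_{\sigma\in\mathcal{S}^n}$ a family of sets such that: (1) $C^*_\sigma\subset X$ for all $\sigma\in\mathcal{S}^n$; (2) $C^*_\sigma$ is $(n-|\operatorname{dom}\sigma|-1)$-connected for all $\sigma\in\mathcal{S}^n$; (3) if $\sigma_1\subset\sigma_2$ then $C^*_{\sigma_1}\supset C^*_{\sigma_2}$; (4) $\sigma(i)\,p_i(y)\ge 0$ for all $\sigma\in\mathcal{S}^n$, all $i\in\operatorname{dom}\sigma$ and all $y\in C^*_\sigma$. Then there is $y\in C^*_\emptyset$ with $p(y)=0$.
   Context: $\mathcal{S}^n$ denotes the set of all partial functions $\sigma:[n]\to\{-1,+1\}$ (including the empty function $\emptyset$), with domain $\operatorname{dom}\sigma$; $\sigma_1\subset\sigma_2$ means $\sigma_2$ extends $\sigma_1$. A space is $k$-connected ($k\ge -1$) if it is nonempty and every continuous map $S^j\to$ the space, $0\le j\le k$, extends to the ball $B^{j+1}$; in particular $(-1)$-connected means nonempty. *)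

theory Defs
  imports "HOL-Analysis.Analysis"
begin

text \<open>Closed unit ball B^(n+1) in R^(n+1) (coordinates 0..n), whose boundary is nsphere n = S^n.\<close>
definition nball :: "nat \<Rightarrow> (nat \<Rightarrow> real) topology" where
  "nball n \<equiv> subtopology (Euclidean_space (Suc n)) {x. (\<Sum>i\<le>n. x i ^ 2) \<le> 1}"

definition k_connected :: "'a topology \<Rightarrow> int \<Rightarrow> 'a set \<Rightarrow> bool" where
  "k_connected X k S \<longleftrightarrow> S \<noteq> {} \<and>
     (\<forall>j::nat. int j \<le> k \<longrightarrow>
        (\<forall>f. continuous_map (nsphere j) (subtopology X S) f \<longrightarrow>
           (\<exists>g. continuous_map (nball j) (subtopology X S) g \<and>
                (\<forall>x\<in>topspace (nsphere j). g x = f x))))"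

definition signvecs :: "nat \<Rightarrow> (nat \<rightharpoonup> int) set" where
  "signvecs n = {\<sigma>. dom \<sigma> \<subseteq> {1..n} \<and> ran \<sigma> \<subseteq> {-1, 1}}"

end

theory Submission
  imports Defs "HOL-Homology.Homology"
begin

text \<open>
  Points of the cube \<open>[-1,1]\<^sup>n\<close> are classified by their sign vectors: the sign vector of \<open>x\<close>
  records the coordinates with \<open>x\<^sub>i = \<plusminus>1\<close>, and the points with sign vector extending \<open>\<sigma>\<close> form
  a face of dimension \<open>n - |dom \<sigma>|\<close>, a ball whose boundary is a sphere of dimension
  \<open>n - |dom \<sigma>| - 1\<close>. Adding faces in order of increasing dimension and using the connectivity of
  \<open>C\<^sub>\<sigma>\<close> to extend across each of them, one builds a continuous map \<open>f\<close> from the cube to \<open>X\<close>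
  sending every point into \<open>C\<close> of its sign vector. The sign condition then says that the
  components \<open>p\<^sub>i \<circ> f\<close> satisfy the boundary conditions of the Poincare-Miranda theorem, and a
  zero \<open>x\<close> of \<open>p \<circ> f\<close> gives the point \<open>f x \<in> C\<^sub>\<emptyset>\<close>.

  Poincare-Miranda is reduced to the non-contractibility of spheres: without a zero, the map
  \<open>q / |q|\<close> on the boundary of the cube would be null-homotopic, since it extends over the cube,
  and homotopic to the identity of the sphere, by the boundary conditions.
\<close>

abbreviation seq_top :: "(nat \<Rightarrow> real) set \<Rightarrow> (nat \<Rightarrow> real) topology" where
  "seq_top S \<equiv> subtopology (powertop_real UNIV) S"

lemma continuous_map_seq_top_coordinate:
  "continuous_map (seq_top S) euclideanreal (\<lambda>x. x i)"
  by (metis UNIV_I continuous_map_from_subtopology continuous_map_product_projection)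

lemma continuous_map_into_seq_top:
  assumes "\<And>i. continuous_map T euclideanreal (\<lambda>x. f x i)" "\<And>x. x \<in> topspace T \<Longrightarrow> f x \<in> S"
  shows "continuous_map T (seq_top S) f"
  using assms by (auto simp: continuous_map_in_subtopology continuous_map_componentwise_UNIV)

lemma continuous_map_if_closedin_Un:
  assumes "closedin X A" "closedin X B"
    and "continuous_map (subtopology X A) Y f" "continuous_map (subtopology X B) Y g"
    and "\<And>x. x \<in> A \<Longrightarrow> x \<in> B \<Longrightarrow> f x = g x"
  shows "continuous_map (subtopology X (A \<union> B)) Y (\<lambda>x. if x \<in> A then f x else g x)"
proof (rule pasting_lemma_closed[where I="{True, False}" and T="\<lambda>b. if b then A else B"
      and f="\<lambda>b. if b then f else g"])
  fix b :: bool
  show "closedin (subtopology X (A \<union> B)) (if b then A else B)"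
    using assms(1,2) by (auto intro: closedin_subset_topspace)
  show "continuous_map (subtopology (subtopology X (A \<union> B)) (if b then A else B)) Y (if b then f else g)"
    using assms(3,4) by (simp add: subtopology_subtopology Int_absorb1)
qed (use assms(5) in auto)

section \<open>Spheres and balls on a finite set of coordinates\<close>

definition sphere_on :: "nat set \<Rightarrow> (nat \<Rightarrow> real) set" where
  "sphere_on J = {x. (\<Sum>i\<in>J. x i ^ 2) = 1 \<and> (\<forall>i. i \<notin> J \<longrightarrow> x i = 0)}"

definition ball_on :: "nat set \<Rightarrow> (nat \<Rightarrow> real) set" where
  "ball_on J = {x. (\<Sum>i\<in>J. x i ^ 2) \<le> 1 \<and> (\<forall>i. i \<notin> J \<longrightarrow> x i = 0)}"

lemma nsphere_eq_sphere_on: "nsphere j = seq_top (sphere_on {..j})"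
  by (simp add: nsphere sphere_on_def not_le)

lemma nball_eq_ball_on: "nball j = seq_top (ball_on {..j})"
proof -
  have "{x. \<forall>i\<ge>Suc j. x i = 0} \<inter> {x. (\<Sum>i\<le>j. (x i)\<^sup>2) \<le> 1} = ball_on {..j}"
    by (auto simp: ball_on_def not_le Suc_le_eq)
  then show ?thesis
    by (simp add: nball_def Euclidean_space_def subtopology_subtopology)
qed

definition reindex :: "(nat \<Rightarrow> nat) \<Rightarrow> nat set \<Rightarrow> (nat \<Rightarrow> real) \<Rightarrow> nat \<Rightarrow> real" where
  "reindex h B x = (\<lambda>i. if i \<in> B then x (h i) else 0)"

lemma continuous_map_reindex: "continuous_map (seq_top S) (powertop_real UNIV) (reindex h B)"
  unfolding reindex_def continuous_map_componentwise_UNIV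
  by (auto intro: continuous_map_if continuous_map_seq_top_coordinate)

lemma sum_square_reindex:
  "bij_betw h B A \<Longrightarrow> (\<Sum>i\<in>B. reindex h B x i ^ 2) = (\<Sum>i\<in>A. x i ^ 2)"
  using sum.reindex_bij_betw[of h B A "\<lambda>i. x i ^ 2"] by (simp add: reindex_def)

lemma reindex_inv_into_reindex:
  "bij_betw h B A \<Longrightarrow> \<forall>i. i \<notin> A \<longrightarrow> x i = 0 \<Longrightarrow> reindex (inv_into B h) A (reindex h B x) = x"
  by (auto simp: reindex_def fun_eq_iff bij_betw_def f_inv_into_f inv_into_into)

lemma reindex_reindex_inv_into:
  "bij_betw h B A \<Longrightarrow> \<forall>i. i \<notin> B \<longrightarrow> y i = 0 \<Longrightarrow> reindex h B (reindex (inv_into B h) A y) = y"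
  by (auto simp: reindex_def fun_eq_iff bij_betw_def)

lemma homeomorphic_maps_reindex:
  assumes "bij_betw h B A"
  shows "homeomorphic_maps
           (seq_top {x. P (\<Sum>i\<in>A. x i ^ 2) \<and> (\<forall>i. i \<notin> A \<longrightarrow> x i = 0)})
           (seq_top {x. P (\<Sum>i\<in>B. x i ^ 2) \<and> (\<forall>i. i \<notin> B \<longrightarrow> x i = 0)})
           (reindex h B) (reindex (inv_into B h) A)"
proof -
  have "continuous_map (seq_top {x. P (\<Sum>i\<in>A'. x i ^ 2) \<and> (\<forall>i. i \<notin> A' \<longrightarrow> x i = 0)})
          (seq_top {x. P (\<Sum>i\<in>B'. x i ^ 2) \<and> (\<forall>i. i \<notin> B' \<longrightarrow> x i = 0)}) (reindex h' B')"
    if "bij_betw h' B' A'" for h' A' B'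
    using continuous_map_reindex[of _ h' B'] sum_square_reindex[OF that]
    by (auto simp: continuous_map_in_subtopology reindex_def)
  then show ?thesis
    using assms bij_betw_inv_into[OF assms]
    by (auto simp: homeomorphic_maps_def reindex_inv_into_reindex reindex_reindex_inv_into)
qed

lemma sphere_on_ball_on_homeomorphic_nsphere_nball:
  assumes "finite J" "J \<noteq> {}"
  obtains f g where "homeomorphic_maps (seq_top (sphere_on J)) (nsphere (card J - 1)) f g"
    "homeomorphic_maps (seq_top (ball_on J)) (nball (card J - 1)) f g"
proof -
  have "card J > 0"
    using assms by (simp add: card_gt_0_iff)
  then have "{0..<card J} = {..card J - 1}"
    by auto
  then obtain e where e: "bij_betw e {..card J - 1} J"
    using ex_bij_betw_nat_finite[OF assms(1)] by metis
  show ?thesis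
    using that homeomorphic_maps_reindex[OF e, of "\<lambda>s. s = 1"] homeomorphic_maps_reindex[OF e, of "\<lambda>s. s \<le> 1"]
    unfolding nsphere_eq_sphere_on nball_eq_ball_on sphere_on_def ball_on_def by blast
qed

lemma not_contractible_sphere_on:
  assumes "finite J" "J \<noteq> {}"
  shows "\<not> contractible_space (seq_top (sphere_on J))"
  using sphere_on_ball_on_homeomorphic_nsphere_nball[OF assms] homeomorphic_space_contractibility
    non_contractible_space_nsphere unfolding homeomorphic_space_def by metis

lemma k_connected_extend_from_sphere_on:
  assumes conn: "k_connected X k S" and J: "finite J" "J \<noteq> {}" and dim: "int (card J) - 1 \<le> k"
    and f: "continuous_map (seq_top (sphere_on J)) (subtopology X S) f"
  obtains g where "continuous_map (seq_top (ball_on J)) (subtopology X S) g"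
    "\<And>x. x \<in> sphere_on J \<Longrightarrow> g x = f x"
proof -
  define j where "j = card J - 1"
  obtain \<phi> \<psi> where sph: "homeomorphic_maps (seq_top (sphere_on J)) (nsphere j) \<phi> \<psi>"
    and ball: "homeomorphic_maps (seq_top (ball_on J)) (nball j) \<phi> \<psi>"
    using sphere_on_ball_on_homeomorphic_nsphere_nball[OF J] unfolding j_def .
  have "card J > 0"
    using J by (simp add: card_gt_0_iff)
  then have "int j \<le> k"
    using dim by (simp add: j_def)
  moreover have "continuous_map (nsphere j) (subtopology X S) (f \<circ> \<psi>)"
    using sph f by (metis continuous_map_compose homeomorphic_maps_def)
  ultimately obtain H where H: "continuous_map (nball j) (subtopology X S) H"
    "\<forall>x\<in>topspace (nsphere j). H x = (f \<circ> \<psi>) x"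
    using conn unfolding k_connected_def by blast
  show ?thesis
  proof
    show "continuous_map (seq_top (ball_on J)) (subtopology X S) (H \<circ> \<phi>)"
      using ball H(1) by (metis continuous_map_compose homeomorphic_maps_def)
    fix x assume "x \<in> sphere_on J"
    then have "\<phi> x \<in> topspace (nsphere j)" "\<psi> (\<phi> x) = x"
      using sph by (auto simp: homeomorphic_maps_def continuous_map_def)
    then show "(H \<circ> \<phi>) x = f x"
      using H(2) by simp
  qed
qed

section \<open>Cubes and their radial maps to spheres and balls\<close>

definition cube :: "nat set \<Rightarrow> (nat \<Rightarrow> real) \<Rightarrow> (nat \<Rightarrow> real) set" where
  "cube J c = {x. (\<forall>i\<in>J. \<bar>x i\<bar> \<le> 1) \<and> (\<forall>i. i \<notin> J \<longrightarrow> x i = c i)}"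

definition cube_frontier :: "nat set \<Rightarrow> (nat \<Rightarrow> real) \<Rightarrow> (nat \<Rightarrow> real) set" where
  "cube_frontier J c = {x \<in> cube J c. \<exists>i\<in>J. \<bar>x i\<bar> = 1}"

lemma cube_eq_PiE: "cube J c = (\<Pi>\<^sub>E i\<in>UNIV. if i \<in> J then {-1..1} else {c i})"
  by (auto simp: cube_def PiE_def Pi_def abs_le_iff)

lemma closedin_cube: "closedin (powertop_real UNIV) (cube J c)"
  unfolding cube_eq_PiE closedin_product_topology by auto

lemma contractible_space_cube: "contractible_space (seq_top (cube J c))"
  unfolding cube_eq_PiE subtopology_product_topology contractible_space_product_topology
  by (auto intro!: convex_imp_contractible)

lemma continuous_map_Max:
  assumes "finite J" "J \<noteq> {}" "\<And>i. i \<in> J \<Longrightarrow> continuous_map T euclideanreal (f i)"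
  shows "continuous_map T euclideanreal (\<lambda>x. Max ((\<lambda>i. f i x) ` J))"
  using assms
proof (induction J rule: finite_ne_induct)
  case (insert j F)
  then have "continuous_map T euclideanreal (\<lambda>x. max (f j x) (Max ((\<lambda>i. f i x) ` F)))"
    by (intro continuous_map_real_max) auto
  with insert show ?case
    by simp
qed simp

definition sup_norm_on :: "nat set \<Rightarrow> (nat \<Rightarrow> real) \<Rightarrow> real" where
  "sup_norm_on J x = Max ((\<lambda>i. \<bar>x i\<bar>) ` J)"

definition norm_on :: "nat set \<Rightarrow> (nat \<Rightarrow> real) \<Rightarrow> real" where
  "norm_on J x = sqrt (\<Sum>i\<in>J. x i ^ 2)"

lemma abs_le_sup_norm_on: "finite J \<Longrightarrow> i \<in> J \<Longrightarrow> \<bar>x i\<bar> \<le> sup_norm_on J x"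
  by (simp add: sup_norm_on_def)

lemma sup_norm_on_attained:
  assumes "finite J" "J \<noteq> {}"
  obtains i where "i \<in> J" "\<bar>x i\<bar> = sup_norm_on J x"
proof -
  have "sup_norm_on J x \<in> (\<lambda>i. \<bar>x i\<bar>) ` J"
    unfolding sup_norm_on_def using assms by (intro Max_in) auto
  then show ?thesis
    using that by auto
qed

lemma sup_norm_on_divide:
  assumes "finite J" "J \<noteq> {}" "r > 0"
  shows "sup_norm_on J (\<lambda>i. x i / r) = sup_norm_on J x / r"
  using mono_Max_commute[of "\<lambda>t. t / r" "(\<lambda>i. \<bar>x i\<bar>) ` J"] assms
  by (simp add: sup_norm_on_def mono_def divide_right_mono image_image)

lemma sup_norm_on_pos:
  assumes "finite J" "x \<in> sphere_on J"
  shows "sup_norm_on J x > 0"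
proof (rule ccontr)
  assume "\<not> sup_norm_on J x > 0"
  then have "\<forall>i\<in>J. x i = 0"
    using abs_le_sup_norm_on[OF assms(1)] by (metis abs_le_zero_iff not_le order_trans)
  then show False
    using assms(2) by (simp add: sphere_on_def)
qed

lemma sup_norm_on_cube_frontier: "finite J \<Longrightarrow> x \<in> cube_frontier J c \<Longrightarrow> sup_norm_on J x = 1"
  unfolding cube_frontier_def cube_def sup_norm_on_def
  by (intro Max_eqI) auto

lemma norm_on_pos: "finite J \<Longrightarrow> i \<in> J \<Longrightarrow> w i \<noteq> 0 \<Longrightarrow> norm_on J w > 0"
  unfolding norm_on_def by (simp add: sum_pos2)

lemma continuous_map_norm_on:
  "finite J \<Longrightarrow> (\<And>i. i \<in> J \<Longrightarrow> continuous_map T euclideanreal (\<lambda>x. w x i)) \<Longrightarrow>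
    continuous_map T euclideanreal (\<lambda>x. norm_on J (w x))"
  unfolding norm_on_def
  by (intro continuous_map_sqrt continuous_map_sum continuous_map_real_pow) auto

definition normalize_on :: "nat set \<Rightarrow> (nat \<Rightarrow> real) \<Rightarrow> nat \<Rightarrow> real" where
  "normalize_on J w = (\<lambda>i. if i \<in> J then w i / norm_on J w else 0)"

lemma normalize_on_sphere_on: "z \<in> sphere_on J \<Longrightarrow> normalize_on J z = z"
  by (auto simp: normalize_on_def norm_on_def sphere_on_def)

lemma normalize_on_in_sphere_on:
  assumes "finite J" "i \<in> J" "w i \<noteq> 0"
  shows "normalize_on J w \<in> sphere_on J"
proof -
  have "norm_on J w > 0"
    using norm_on_pos assms by blast
  then have "(\<Sum>i\<in>J. (w i / norm_on J w) ^ 2) = 1"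
    by (simp add: power_divide flip: sum_divide_distrib) (simp add: norm_on_def sum_nonneg)
  then show ?thesis
    by (simp add: normalize_on_def sphere_on_def)
qed

lemma continuous_map_normalize_on:
  assumes J: "finite J" and cont: "\<And>i. i \<in> J \<Longrightarrow> continuous_map T euclideanreal (\<lambda>x. w x i)"
    and nonzero: "\<And>x. x \<in> topspace T \<Longrightarrow> \<exists>i\<in>J. w x i \<noteq> 0"
  shows "continuous_map T (seq_top (sphere_on J)) (\<lambda>x. normalize_on J (w x))"
proof (rule continuous_map_into_seq_top)
  have "norm_on J (w x) \<noteq> 0" if "x \<in> topspace T" for x
    using nonzero[OF that] norm_on_pos[OF J] by force
  then have "continuous_map T euclideanreal (\<lambda>x. w x i / norm_on J (w x))" if "i \<in> J" for i
    using cont[OF that] continuous_map_norm_on[OF J cont] by (intro continuous_map_real_divide)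
  then show "continuous_map T euclideanreal (\<lambda>x. normalize_on J (w x) i)" for i
    by (cases "i \<in> J") (simp_all add: normalize_on_def)
next
  show "normalize_on J (w x) \<in> sphere_on J" if "x \<in> topspace T" for x
    using nonzero[OF that] normalize_on_in_sphere_on[OF J] by blast
qed

definition sphere_to_cube :: "nat set \<Rightarrow> (nat \<Rightarrow> real) \<Rightarrow> (nat \<Rightarrow> real) \<Rightarrow> nat \<Rightarrow> real" where
  "sphere_to_cube J c z = (\<lambda>i. if i \<in> J then z i / sup_norm_on J z else c i)"

definition cube_to_ball :: "nat set \<Rightarrow> (nat \<Rightarrow> real) \<Rightarrow> nat \<Rightarrow> real" where
  "cube_to_ball J x = (\<lambda>i. if i \<in> J then x i / max 1 (norm_on J x) else 0)"

lemma sphere_to_cube_eq_sgn: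
  assumes "finite J" "z \<in> sphere_on J" "i \<in> J" "\<bar>z i\<bar> = sup_norm_on J z"
  shows "sphere_to_cube J c z i = sgn (z i)"
  using assms sup_norm_on_pos[OF assms(1,2)] by (simp add: sphere_to_cube_def real_sgn_eq)

lemma sphere_to_cube_in_cube_frontier:
  assumes J: "finite J" "J \<noteq> {}" and z: "z \<in> sphere_on J"
  shows "sphere_to_cube J c z \<in> cube_frontier J c"
proof -
  have pos: "sup_norm_on J z > 0"
    using sup_norm_on_pos[OF J(1) z] .
  have "\<bar>sphere_to_cube J c z i\<bar> \<le> 1" if "i \<in> J" for i
    using abs_le_sup_norm_on[OF J(1) that, of z] pos that by (simp add: sphere_to_cube_def abs_divide)
  moreover obtain i where "i \<in> J" "\<bar>z i\<bar> = sup_norm_on J z"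
    using sup_norm_on_attained[OF J] .
  then have "i \<in> J" "\<bar>sphere_to_cube J c z i\<bar> = 1"
    using sphere_to_cube_eq_sgn[OF J(1) z] pos by (auto simp: abs_sgn_eq_1)
  ultimately show ?thesis
    by (auto simp: cube_frontier_def cube_def sphere_to_cube_def)
qed

lemma continuous_map_sphere_to_cube:
  assumes J: "finite J" "J \<noteq> {}"
  shows "continuous_map (seq_top (sphere_on J)) (seq_top (cube_frontier J c)) (sphere_to_cube J c)"
proof (rule continuous_map_into_seq_top)
  have "continuous_map (seq_top (sphere_on J)) euclideanreal (sup_norm_on J)"
    unfolding sup_norm_on_def
    by (intro continuous_map_Max[OF J] continuous_map_real_abs continuous_map_seq_top_coordinate)
  then have "continuous_map (seq_top (sphere_on J)) euclideanreal (\<lambda>z. z i / sup_norm_on J z)" for i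
    using sup_norm_on_pos[OF J(1)]
    by (intro continuous_map_real_divide continuous_map_seq_top_coordinate) force+
  then show "continuous_map (seq_top (sphere_on J)) euclideanreal (\<lambda>z. sphere_to_cube J c z i)" for i
    by (simp add: sphere_to_cube_def)
qed (use sphere_to_cube_in_cube_frontier[OF J] in simp)

lemma continuous_map_cube_to_ball:
  assumes J: "finite J"
  shows "continuous_map (seq_top (cube J c)) (seq_top (ball_on J)) (cube_to_ball J)"
proof (rule continuous_map_into_seq_top)
  show "continuous_map (seq_top (cube J c)) euclideanreal (\<lambda>x. cube_to_ball J x i)" for i
    unfolding cube_to_ball_def
    by (intro continuous_map_if continuous_map_real_divide continuous_map_real_max
        continuous_map_norm_on[OF J] continuous_map_seq_top_coordinate) auto
next
  fix x
  define m where "m = max 1 (norm_on J x)"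
  have "norm_on J x ^ 2 \<le> m ^ 2"
    unfolding m_def by (intro power_mono) (auto simp: norm_on_def sum_nonneg)
  then have "(\<Sum>i\<in>J. (x i / m) ^ 2) \<le> 1"
    by (simp add: power_divide norm_on_def sum_nonneg m_def flip: sum_divide_distrib)
  then show "cube_to_ball J x \<in> ball_on J"
    by (simp add: cube_to_ball_def ball_on_def m_def)
qed

lemma cube_to_ball_cube_frontier:
  assumes J: "finite J" and x: "x \<in> cube_frontier J c"
  shows "cube_to_ball J x \<in> sphere_on J" "sphere_to_cube J c (cube_to_ball J x) = x"
proof -
  obtain i0 where i0: "i0 \<in> J" "\<bar>x i0\<bar> = 1"
    using x by (auto simp: cube_frontier_def)
  define r where "r = norm_on J x"
  have "x i0 ^ 2 = 1"
    using i0(2) by (metis power2_abs power_one)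
  then have "1 \<le> (\<Sum>i\<in>J. x i ^ 2)"
    using member_le_sum[of i0 J "\<lambda>i. x i ^ 2"] i0(1) J by simp
  then have r: "r \<ge> 1"
    by (simp add: r_def norm_on_def)
  then have ball_eq: "cube_to_ball J x = normalize_on J x"
    unfolding cube_to_ball_def normalize_on_def r_def by (simp only: max_absorb2)
  then show "cube_to_ball J x \<in> sphere_on J"
    using normalize_on_in_sphere_on[OF J i0(1)] i0(2) by auto
  have "sup_norm_on J (normalize_on J x) = sup_norm_on J (\<lambda>i. x i / r)"
    unfolding sup_norm_on_def normalize_on_def r_def by (intro arg_cong[where f=Max] image_cong) auto
  also have "\<dots> = 1 / r"
    using sup_norm_on_divide[of J r x] sup_norm_on_cube_frontier[OF J x] i0(1) r J by auto
  finally show "sphere_to_cube J c (cube_to_ball J x) = x"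
    using x r unfolding ball_eq
    by (auto simp: sphere_to_cube_def normalize_on_def r_def cube_frontier_def cube_def fun_eq_iff)
qed

lemma extend_from_cube_frontier:
  assumes J: "finite J" "J \<noteq> {}"
    and extend: "\<And>f. continuous_map (seq_top (sphere_on J)) Y f \<Longrightarrow>
       \<exists>g. continuous_map (seq_top (ball_on J)) Y g \<and> (\<forall>x\<in>sphere_on J. g x = f x)"
    and f: "continuous_map (seq_top (cube_frontier J c)) Y f"
  obtains g where "continuous_map (seq_top (cube J c)) Y g" "\<And>x. x \<in> cube_frontier J c \<Longrightarrow> g x = f x"
proof -
  obtain h where h: "continuous_map (seq_top (ball_on J)) Y h"
    "\<forall>x\<in>sphere_on J. h x = (f \<circ> sphere_to_cube J c) x"
    using extend continuous_map_compose[OF continuous_map_sphere_to_cube[OF J] f] by blast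
  show ?thesis
  proof
    show "continuous_map (seq_top (cube J c)) Y (h \<circ> cube_to_ball J)"
      using continuous_map_compose[OF continuous_map_cube_to_ball[OF J(1)] h(1)] .
    show "(h \<circ> cube_to_ball J) x = f x" if "x \<in> cube_frontier J c" for x
      using cube_to_ball_cube_frontier[OF J(1) that] h(2) by simp
  qed
qed

section \<open>The Poincare-Miranda theorem\<close>

lemma convex_combination_aligned_nonzero:
  fixes a b t :: real
  assumes "a \<noteq> 0" "sgn a * b \<ge> 0" "0 \<le> t" "t < 1"
  shows "(1 - t) * a + t * b \<noteq> 0"
proof -
  have "0 < (1 - t) * \<bar>a\<bar> + t * (sgn a * b)"
    using assms by (simp add: add_pos_nonneg)
  also have "\<dots> = sgn a * ((1 - t) * a + t * b)"
    by (simp add: algebra_simps abs_real_def sgn_if)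
  finally show ?thesis
    by auto
qed

lemma homotopic_with_id_normalize_on:
  assumes I: "finite I" "I \<noteq> {}"
    and cont: "\<And>i. i \<in> I \<Longrightarrow> continuous_map (seq_top (sphere_on I)) euclideanreal (\<lambda>z. F z i)"
    and nonzero: "\<And>z. z \<in> sphere_on I \<Longrightarrow> \<exists>i\<in>I. F z i \<noteq> 0"
    and aligned: "\<And>z i. z \<in> sphere_on I \<Longrightarrow> i \<in> I \<Longrightarrow> \<bar>z i\<bar> = sup_norm_on I z \<Longrightarrow> sgn (z i) * F z i \<ge> 0"
  shows "homotopic_with (\<lambda>_. True) (seq_top (sphere_on I)) (seq_top (sphere_on I))
           id (\<lambda>z. normalize_on I (F z))"
proof -
  define w where "w p = (\<lambda>i. (1 - fst p) * snd p i + fst p * F (snd p) i)" for p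
  let ?T = "prod_topology (top_of_set {0..1::real}) (seq_top (sphere_on I))"
  have "continuous_map ?T (seq_top (sphere_on I)) (\<lambda>p. normalize_on I (w p))"
  proof (rule continuous_map_normalize_on[OF I(1)])
    show "continuous_map ?T euclideanreal (\<lambda>p. w p i)" if "i \<in> I" for i
      unfolding w_def
      by (intro continuous_map_add continuous_map_real_mult continuous_map_diff
          continuous_map_const[THEN iffD2] continuous_map_compose[OF continuous_map_snd, unfolded o_def]
          cont[OF that] continuous_map_seq_top_coordinate
          continuous_map_into_fulltopology[OF continuous_map_fst]) auto
  next
    fix p assume "p \<in> topspace ?T"
    then obtain t z where p: "p = (t, z)" and t: "0 \<le> t" "t \<le> 1" and z: "z \<in> sphere_on I"
      by auto
    show "\<exists>i\<in>I. w p i \<noteq> 0"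
    proof (cases "t = 1")
      case True
      then show ?thesis
        using nonzero[OF z] by (simp add: p w_def)
    next
      case False
      obtain i where i: "i \<in> I" "\<bar>z i\<bar> = sup_norm_on I z"
        using sup_norm_on_attained[OF I] .
      then have "z i \<noteq> 0"
        using sup_norm_on_pos[OF I(1) z] by auto
      then have "w p i \<noteq> 0"
        using convex_combination_aligned_nonzero aligned[OF z i] t False by (simp add: p w_def)
      then show ?thesis
        using i(1) by blast
    qed
  qed
  then have "homotopic_with (\<lambda>_. True) (seq_top (sphere_on I)) (seq_top (sphere_on I))
      (\<lambda>z. normalize_on I (w (0, z))) (\<lambda>z. normalize_on I (w (1, z)))"
    unfolding homotopic_with_def by force
  then show ?thesis
    by (rule homotopic_with_eq) (simp_all add: w_def normalize_on_sphere_on)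
qed

lemma poincare_miranda:
  fixes q :: "nat \<Rightarrow> (nat \<Rightarrow> real) \<Rightarrow> real"
  assumes I: "finite I" "I \<noteq> {}"
    and cont: "\<And>i. i \<in> I \<Longrightarrow> continuous_map (seq_top (cube I (\<lambda>_. 0))) euclideanreal (q i)"
    and pos: "\<And>i x. i \<in> I \<Longrightarrow> x \<in> cube I (\<lambda>_. 0) \<Longrightarrow> x i = 1 \<Longrightarrow> q i x \<ge> 0"
    and neg: "\<And>i x. i \<in> I \<Longrightarrow> x \<in> cube I (\<lambda>_. 0) \<Longrightarrow> x i = -1 \<Longrightarrow> q i x \<le> 0"
  shows "\<exists>x\<in>cube I (\<lambda>_. 0). \<forall>i\<in>I. q i x = 0"
proof (rule ccontr)
  let ?K = "cube I (\<lambda>_. 0)" and ?S = "sphere_on I" and ?r = "sphere_to_cube I (\<lambda>_. 0)"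
  let ?G = "\<lambda>x. normalize_on I (\<lambda>i. q i x)"
  assume "\<not> ?thesis"
  then have nonzero: "\<exists>i\<in>I. q i x \<noteq> 0" if "x \<in> ?K" for x
    using that by blast
  have r_K: "?r z \<in> ?K" if "z \<in> ?S" for z
    using sphere_to_cube_in_cube_frontier[OF I that] by (simp add: cube_frontier_def)
  have r: "continuous_map (seq_top ?S) (seq_top ?K) ?r"
    using continuous_map_sphere_to_cube[OF I] r_K by (simp add: continuous_map_in_subtopology)
  have G: "continuous_map (seq_top ?K) (seq_top ?S) ?G"
    using continuous_map_normalize_on[OF I(1) cont nonzero] by simp
  obtain a where "homotopic_with (\<lambda>_. True) (seq_top ?S) (seq_top ?S) (?G \<circ> ?r) (\<lambda>_. a)"
    using nullhomotopic_through_contractible_space[OF r G contractible_space_cube] .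
  moreover have "homotopic_with (\<lambda>_. True) (seq_top ?S) (seq_top ?S) id (?G \<circ> ?r)"
    unfolding o_def
  proof (rule homotopic_with_id_normalize_on[OF I])
    show "continuous_map (seq_top ?S) euclideanreal (\<lambda>z. q i (?r z))" if "i \<in> I" for i
      using continuous_map_compose[OF r cont[OF that]] by (simp add: o_def)
    show "\<exists>i\<in>I. q i (?r z) \<noteq> 0" if "z \<in> ?S" for z
      using nonzero r_K that by blast
    show "sgn (z i) * q i (?r z) \<ge> 0" if "z \<in> ?S" "i \<in> I" "\<bar>z i\<bar> = sup_norm_on I z" for z i
      using sphere_to_cube_eq_sgn[OF I(1) that] pos[OF that(2) r_K] neg[OF that(2) r_K] that(1)
      by (cases "z i > 0") (auto simp: sgn_if)
  qed
  ultimately have "contractible_space (seq_top ?S)"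
    unfolding contractible_space_def using homotopic_with_trans by blast
  then show False
    using not_contractible_sphere_on[OF I] by contradiction
qed

section \<open>Faces of the cube indexed by sign vectors\<close>

lemma signvecs_SomeD: "\<sigma> \<in> signvecs n \<Longrightarrow> \<sigma> i = Some s \<Longrightarrow> i \<in> {1..n} \<and> (s = 1 \<or> s = -1)"
  unfolding signvecs_def by (auto simp: dom_def ran_def)

lemma finite_signvecs: "finite (signvecs n)"
proof -
  have "signvecs n \<subseteq> (\<Union>A\<in>Pow {1..n}. {m. dom m = A \<and> ran m \<subseteq> {-1, 1}})"
    unfolding signvecs_def by auto
  moreover have "finite (\<Union>A\<in>Pow {1..n}. {m. dom m = A \<and> ran m \<subseteq> {-1, 1::int}})"
    by (intro finite_UN_I finite_set_of_finite_maps) (auto intro: finite_subset)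
  ultimately show ?thesis
    by (rule finite_subset)
qed

definition sign_vector :: "nat \<Rightarrow> (nat \<Rightarrow> real) \<Rightarrow> nat \<rightharpoonup> int" where
  "sign_vector n x i =
     (if i \<in> {1..n} \<and> x i = 1 then Some 1 else if i \<in> {1..n} \<and> x i = -1 then Some (-1) else None)"

definition face_centre :: "(nat \<rightharpoonup> int) \<Rightarrow> nat \<Rightarrow> real" where
  "face_centre \<sigma> i = (case \<sigma> i of Some s \<Rightarrow> of_int s | None \<Rightarrow> 0)"

text \<open>
  \<open>face n \<sigma>\<close> is the face of \<open>[-1,1]\<^sup>n\<close> on which \<open>x\<^sub>i = \<sigma> i\<close> for \<open>i \<in> dom \<sigma>\<close>, and
  \<open>sign_vector n x\<close> indexes the smallest face containing \<open>x\<close>.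
\<close>

definition face :: "nat \<Rightarrow> (nat \<rightharpoonup> int) \<Rightarrow> (nat \<Rightarrow> real) set" where
  "face n \<sigma> = cube ({1..n} - dom \<sigma>) (face_centre \<sigma>)"

definition face_frontier :: "nat \<Rightarrow> (nat \<rightharpoonup> int) \<Rightarrow> (nat \<Rightarrow> real) set" where
  "face_frontier n \<sigma> = cube_frontier ({1..n} - dom \<sigma>) (face_centre \<sigma>)"

lemma sign_vector_in_signvecs: "sign_vector n x \<in> signvecs n"
  unfolding signvecs_def sign_vector_def by (auto simp: dom_def ran_def split: if_splits)

lemma face_empty: "face n Map.empty = cube {1..n} (\<lambda>_. 0)"
  by (simp add: face_def face_centre_def[abs_def])

lemma face_frontier_subset_face: "face_frontier n \<sigma> \<subseteq> face n \<sigma>"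
  by (auto simp: face_frontier_def face_def cube_frontier_def)

lemma mem_face_iff:
  "x \<in> face n \<sigma> \<longleftrightarrow> (\<forall>i\<in>{1..n} - dom \<sigma>. \<bar>x i\<bar> \<le> 1) \<and>
     (\<forall>i s. \<sigma> i = Some s \<longrightarrow> x i = of_int s) \<and> (\<forall>i. i \<notin> {1..n} \<and> \<sigma> i = None \<longrightarrow> x i = 0)"
  by (auto simp: face_def cube_def face_centre_def split: option.splits)

lemma face_subset_face_empty:
  assumes \<sigma>: "\<sigma> \<in> signvecs n" and x: "x \<in> face n \<sigma>"
  shows "x \<in> face n Map.empty"
proof -
  have "\<bar>x i\<bar> \<le> 1" if "i \<in> {1..n}" for i
  proof (cases "\<sigma> i")
    case (Some s)
    then show ?thesis
      using x signvecs_SomeD[OF \<sigma> Some] by (auto simp: mem_face_iff)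
  qed (use x that in \<open>auto simp: mem_face_iff\<close>)
  moreover have "x i = 0" if "i \<notin> {1..n}" for i
    using x that signvecs_SomeD[OF \<sigma>] by (cases "\<sigma> i") (auto simp: mem_face_iff)
  ultimately show ?thesis
    by (auto simp: mem_face_iff)
qed

lemma map_le_sign_vector:
  assumes \<sigma>: "\<sigma> \<in> signvecs n" and x: "x \<in> face n \<sigma>"
  shows "\<sigma> \<subseteq>\<^sub>m sign_vector n x"
  unfolding map_le_def
proof
  fix i assume "i \<in> dom \<sigma>"
  then obtain s where s: "\<sigma> i = Some s" by blast
  then show "\<sigma> i = sign_vector n x i"
    using x signvecs_SomeD[OF \<sigma> s] by (auto simp: mem_face_iff sign_vector_def)
qed

lemma mem_face_sign_vector: "x \<in> face n Map.empty \<Longrightarrow> x \<in> face n (sign_vector n x)"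
  by (auto simp: mem_face_iff sign_vector_def split: if_splits)

lemma face_frontier_iff:
  assumes \<sigma>: "\<sigma> \<in> signvecs n" and x: "x \<in> face n \<sigma>"
  shows "x \<in> face_frontier n \<sigma> \<longleftrightarrow> sign_vector n x \<noteq> \<sigma>"
proof
  assume "x \<in> face_frontier n \<sigma>"
  then obtain i where "i \<in> {1..n} - dom \<sigma>" "\<bar>x i\<bar> = 1"
    unfolding face_frontier_def cube_frontier_def by blast
  then have "sign_vector n x i \<noteq> \<sigma> i"
    by (auto simp: sign_vector_def abs_eq_iff)
  then show "sign_vector n x \<noteq> \<sigma>"
    by metis
next
  assume "sign_vector n x \<noteq> \<sigma>"
  then obtain i where "sign_vector n x i \<noteq> \<sigma> i"
    by blast
  with map_le_sign_vector[OF \<sigma> x] have "\<sigma> i = None" "sign_vector n x i \<noteq> None"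
    unfolding map_le_def by (metis domIff)+
  then have "i \<in> {1..n} - dom \<sigma>" "\<bar>x i\<bar> = 1"
    by (auto simp: sign_vector_def split: if_splits)
  then show "x \<in> face_frontier n \<sigma>"
    using x unfolding face_frontier_def face_def cube_frontier_def by blast
qed

lemma face_frontier_subset_larger_face:
  assumes \<sigma>: "\<sigma> \<in> signvecs n" and x: "x \<in> face_frontier n \<sigma>"
  obtains \<tau> where "\<tau> \<in> signvecs n" "\<sigma> \<subseteq>\<^sub>m \<tau>" "\<tau> \<noteq> \<sigma>" "x \<in> face n \<tau>"
proof -
  have "x \<in> face n \<sigma>"
    using x face_frontier_subset_face by blast
  then show ?thesis
    using that[of "sign_vector n x"] x sign_vector_in_signvecs map_le_sign_vector[OF \<sigma>]
      face_frontier_iff[OF \<sigma>] mem_face_sign_vector face_subset_face_empty[OF \<sigma>] by blast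
qed

lemma face_inter_face_subset_face_frontier:
  assumes "\<sigma> \<in> signvecs n" "\<tau> \<in> signvecs n" "\<not> \<tau> \<subseteq>\<^sub>m \<sigma>" "x \<in> face n \<sigma>" "x \<in> face n \<tau>"
  shows "x \<in> face_frontier n \<sigma>"
  using assms face_frontier_iff map_le_sign_vector by metis

lemma extend_over_face:
  assumes \<sigma>: "\<sigma> \<in> signvecs n" and S: "S \<subseteq> topspace X"
    and conn: "k_connected X (int n - int (card (dom \<sigma>)) - 1) S"
    and f: "continuous_map (seq_top (face_frontier n \<sigma>)) (subtopology X S) f"
  obtains g where "continuous_map (seq_top (face n \<sigma>)) (subtopology X S) g"
    "\<And>x. x \<in> face_frontier n \<sigma> \<Longrightarrow> g x = f x"
proof (cases "{1..n} - dom \<sigma> = {}")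
  case True
  obtain a where "a \<in> S"
    using conn by (auto simp: k_connected_def)
  then have "continuous_map (seq_top (face n \<sigma>)) (subtopology X S) (\<lambda>_. a)"
    using S by auto
  moreover have "face_frontier n \<sigma> = {}"
    unfolding face_frontier_def cube_frontier_def True by simp
  ultimately show ?thesis
    using that by blast
next
  case False
  let ?J = "{1..n} - dom \<sigma>"
  have "dom \<sigma> \<subseteq> {1..n}"
    using \<sigma> by (simp add: signvecs_def)
  then have "card ?J = n - card (dom \<sigma>)" "card (dom \<sigma>) \<le> n"
    using card_Diff_subset[of "dom \<sigma>" "{1..n}"] card_mono[of "{1..n}" "dom \<sigma>"]
    by (auto intro: finite_subset)
  then have "int (card ?J) - 1 \<le> int n - int (card (dom \<sigma>)) - 1"
    by simp
  then have extend: "\<exists>g. continuous_map (seq_top (ball_on ?J)) (subtopology X S) g \<and> (\<forall>x\<in>sphere_on ?J. g x = h x)"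
    if "continuous_map (seq_top (sphere_on ?J)) (subtopology X S) h" for h
    using k_connected_extend_from_sphere_on[OF conn _ False _ that] by (metis finite_Diff finite_atLeastAtMost)
  obtain g where "continuous_map (seq_top (cube ?J (face_centre \<sigma>))) (subtopology X S) g"
      "\<And>x. x \<in> cube_frontier ?J (face_centre \<sigma>) \<Longrightarrow> g x = f x"
    using extend_from_cube_frontier[OF _ False extend f[unfolded face_frontier_def]] by blast
  then show ?thesis
    using that unfolding face_def face_frontier_def by blast
qed

section \<open>Maps from the cube carried by the sets \<open>C \<sigma>\<close>\<close>

definition sign_carried ::
  "'a topology \<Rightarrow> nat \<Rightarrow> ((nat \<rightharpoonup> int) \<Rightarrow> 'a set) \<Rightarrow> (nat \<Rightarrow> real) set \<Rightarrow> ((nat \<Rightarrow> real) \<Rightarrow> 'a) \<Rightarrow> bool"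
  where "sign_carried X n C U f \<longleftrightarrow>
    continuous_map (seq_top U) X f \<and> (\<forall>x\<in>U. f x \<in> C (sign_vector n x))"

lemma closedin_Union_faces: "T \<subseteq> signvecs n \<Longrightarrow> closedin (powertop_real UNIV) (\<Union>\<tau>\<in>T. face n \<tau>)"
  using finite_subset[OF _ finite_signvecs] by (intro closedin_Union) (auto simp: face_def closedin_cube)

lemma sign_carried_extend_over_face:
  assumes \<sigma>: "\<sigma> \<in> signvecs n" and S: "C \<sigma> \<subseteq> topspace X"
    and conn: "k_connected X (int n - int (card (dom \<sigma>)) - 1) (C \<sigma>)"
    and mono: "\<And>\<tau>. \<tau> \<in> signvecs n \<Longrightarrow> \<sigma> \<subseteq>\<^sub>m \<tau> \<Longrightarrow> C \<tau> \<subseteq> C \<sigma>"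
    and T: "T \<subseteq> signvecs n"
    and above: "\<And>\<tau>. \<tau> \<in> signvecs n \<Longrightarrow> \<sigma> \<subseteq>\<^sub>m \<tau> \<Longrightarrow> \<tau> \<noteq> \<sigma> \<Longrightarrow> \<tau> \<in> T"
    and not_below: "\<And>\<tau>. \<tau> \<in> T \<Longrightarrow> \<not> \<tau> \<subseteq>\<^sub>m \<sigma>"
    and f: "sign_carried X n C (\<Union>\<tau>\<in>T. face n \<tau>) f"
  obtains g where "sign_carried X n C (face n \<sigma> \<union> (\<Union>\<tau>\<in>T. face n \<tau>)) g"
proof -
  let ?U = "\<Union>\<tau>\<in>T. face n \<tau>"
  have f_cont: "continuous_map (seq_top ?U) X f" and f_carried: "\<And>x. x \<in> ?U \<Longrightarrow> f x \<in> C (sign_vector n x)"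
    using f by (auto simp: sign_carried_def)
  have frontier_in_U: "x \<in> ?U" if "x \<in> face_frontier n \<sigma>" for x
    by (rule face_frontier_subset_larger_face[OF \<sigma> that]) (use above in blast)
  have face_inter_U: "x \<in> face_frontier n \<sigma>" if "x \<in> face n \<sigma>" "x \<in> ?U" for x
    using that face_inter_face_subset_face_frontier[OF \<sigma>] not_below T by blast
  have "continuous_map (seq_top (face_frontier n \<sigma>)) (subtopology X (C \<sigma>)) f"
    unfolding continuous_map_in_subtopology
  proof
    show "continuous_map (seq_top (face_frontier n \<sigma>)) X f"
      using continuous_map_from_subtopology_mono[OF f_cont] frontier_in_U by blast
    show "f \<in> topspace (seq_top (face_frontier n \<sigma>)) \<rightarrow> C \<sigma>"
      using f_carried frontier_in_U mono[OF sign_vector_in_signvecs] map_le_sign_vector[OF \<sigma>]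
        face_frontier_subset_face by fastforce
  qed
  then obtain g where g: "continuous_map (seq_top (face n \<sigma>)) (subtopology X (C \<sigma>)) g"
    and g_eq: "\<And>x. x \<in> face_frontier n \<sigma> \<Longrightarrow> g x = f x"
    using extend_over_face[OF \<sigma> S conn] by blast
  let ?h = "\<lambda>x. if x \<in> face n \<sigma> then g x else f x"
  have "continuous_map (seq_top (face n \<sigma> \<union> ?U)) X ?h"
    using g face_inter_U g_eq
    by (intro continuous_map_if_closedin_Un f_cont closedin_Union_faces[OF T])
      (auto simp: face_def closedin_cube continuous_map_in_subtopology)
  moreover have "?h x \<in> C (sign_vector n x)" if "x \<in> face n \<sigma> \<union> ?U" for x
  proof (cases "x \<in> face n \<sigma>")
    case True
    then show ?thesis
      using g g_eq f_carried frontier_in_U face_frontier_iff[OF \<sigma> True]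
      by (cases "x \<in> face_frontier n \<sigma>") (auto simp: continuous_map_in_subtopology Pi_iff)
  qed (use that f_carried in auto)
  ultimately show ?thesis
    using that[of ?h] unfolding sign_carried_def by blast
qed

lemma map_le_card_dom_less:
  assumes "finite (dom \<sigma>)" "\<tau> \<subseteq>\<^sub>m \<sigma>" "\<tau> \<noteq> \<sigma>"
  shows "card (dom \<tau>) < card (dom \<sigma>)"
proof -
  have "dom \<tau> \<noteq> dom \<sigma>"
    using assms(2,3) map_le_antisym unfolding map_le_def by metis
  then show ?thesis
    using map_le_implies_dom_le[OF assms(2)] assms(1) by (simp add: psubset_card_mono)
qed

text \<open>
  Faces are added in order of increasing dimension, i.e.\ of decreasing \<open>card (dom \<sigma>)\<close>: when
  \<open>face n \<sigma>\<close> is added, the faces of all \<open>\<tau> \<supset> \<sigma>\<close>, which cover its frontier, are already present.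
\<close>

lemma sign_carried_exists:
  assumes S: "\<And>\<sigma>. \<sigma> \<in> signvecs n \<Longrightarrow> C \<sigma> \<subseteq> topspace X"
    and conn: "\<And>\<sigma>. \<sigma> \<in> signvecs n \<Longrightarrow> k_connected X (int n - int (card (dom \<sigma>)) - 1) (C \<sigma>)"
    and mono: "\<And>\<sigma> \<tau>. \<sigma> \<in> signvecs n \<Longrightarrow> \<tau> \<in> signvecs n \<Longrightarrow> \<sigma> \<subseteq>\<^sub>m \<tau> \<Longrightarrow> C \<tau> \<subseteq> C \<sigma>"
    and "T \<subseteq> signvecs n" "\<And>\<sigma> \<tau>. \<sigma> \<in> T \<Longrightarrow> \<tau> \<in> signvecs n \<Longrightarrow> \<sigma> \<subseteq>\<^sub>m \<tau> \<Longrightarrow> \<tau> \<in> T"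
  shows "\<exists>f. sign_carried X n C (\<Union>\<sigma>\<in>T. face n \<sigma>) f"
  using assms(4,5)
proof (induction "card T" arbitrary: T rule: less_induct)
  case less
  note T = less.prems(1) and upward = less.prems(2)
  show ?case
  proof (cases "T = {}")
    case True
    have "sign_carried X n C {} f" for f
      by (simp add: sign_carried_def)
    with True show ?thesis
      by auto
  next
    case False
    then obtain \<sigma> where \<sigma>: "\<sigma> \<in> T" and minimal: "\<And>\<tau>. \<tau> \<in> T \<Longrightarrow> card (dom \<sigma>) \<le> card (dom \<tau>)"
      using ex_has_least_nat[of "\<lambda>\<tau>. \<tau> \<in> T" _ "\<lambda>\<tau>. card (dom \<tau>)"] by blast
    have \<sigma>_sign: "\<sigma> \<in> signvecs n"
      using \<sigma> T by blast
    have "finite (dom \<sigma>)"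
      using \<sigma>_sign by (auto simp: signvecs_def intro: finite_subset)
    then have not_below: "\<not> \<tau> \<subseteq>\<^sub>m \<sigma>" if "\<tau> \<in> T - {\<sigma>}" for \<tau>
      using that minimal map_le_card_dom_less by (metis DiffE insertCI not_le)
    have "card (T - {\<sigma>}) < card T"
      using \<sigma> finite_subset[OF T finite_signvecs] by (meson card_Diff1_less)
    moreover have "\<rho> \<in> T - {\<sigma>}" if "\<tau> \<in> T - {\<sigma>}" "\<rho> \<in> signvecs n" "\<tau> \<subseteq>\<^sub>m \<rho>" for \<tau> \<rho>
      using that upward not_below by blast
    ultimately obtain f where "sign_carried X n C (\<Union>\<tau>\<in>T - {\<sigma>}. face n \<tau>) f"
      using less.hyps T by blast
    then obtain g where "sign_carried X n C (face n \<sigma> \<union> (\<Union>\<tau>\<in>T - {\<sigma>}. face n \<tau>)) g"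
      using sign_carried_extend_over_face[where C=C and X=X and T="T - {\<sigma>}",
          OF \<sigma>_sign S[OF \<sigma>_sign] conn[OF \<sigma>_sign] mono[OF \<sigma>_sign]] T upward[OF \<sigma>] not_below
      by blast
    moreover have "face n \<sigma> \<union> (\<Union>\<tau>\<in>T - {\<sigma>}. face n \<tau>) = (\<Union>\<tau>\<in>T. face n \<tau>)"
      using \<sigma> by blast
    ultimately show ?thesis
      by auto
  qed
qed

lemma sign_carried_map_on_cube:
  assumes "\<And>\<sigma>. \<sigma> \<in> signvecs n \<Longrightarrow> C \<sigma> \<subseteq> topspace X"
    and "\<And>\<sigma>. \<sigma> \<in> signvecs n \<Longrightarrow> k_connected X (int n - int (card (dom \<sigma>)) - 1) (C \<sigma>)"
    and "\<And>\<sigma> \<tau>. \<sigma> \<in> signvecs n \<Longrightarrow> \<tau> \<in> signvecs n \<Longrightarrow> \<sigma> \<subseteq>\<^sub>m \<tau> \<Longrightarrow> C \<tau> \<subseteq> C \<sigma>"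
  obtains f where "continuous_map (seq_top (cube {1..n} (\<lambda>_. 0))) X f"
    "\<And>x. x \<in> cube {1..n} (\<lambda>_. 0) \<Longrightarrow> f x \<in> C (sign_vector n x)"
proof -
  have "(\<Union>\<sigma>\<in>signvecs n. face n \<sigma>) = cube {1..n} (\<lambda>_. 0)"
    unfolding face_empty[symmetric] using face_subset_face_empty by (auto simp: signvecs_def)
  then show ?thesis
    using sign_carried_exists[of n C X "signvecs n"] assms that by (auto simp: sign_carried_def)
qed

theorem mainTheorem3:
  fixes X :: "'a topology" and n :: nat and p :: "'a \<Rightarrow> nat \<Rightarrow> real"
    and C :: "(nat \<rightharpoonup> int) \<Rightarrow> 'a set"
  assumes p_cont: "\<forall>i\<in>{1..n}. continuous_map X euclideanreal (\<lambda>y. p y i)"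
    and sub: "\<forall>\<sigma>\<in>signvecs n. C \<sigma> \<subseteq> topspace X"
    and conn: "\<forall>\<sigma>\<in>signvecs n. k_connected X (int n - int (card (dom \<sigma>)) - 1) (C \<sigma>)"
    and mono: "\<forall>\<sigma>1\<in>signvecs n. \<forall>\<sigma>2\<in>signvecs n. \<sigma>1 \<subseteq>\<^sub>m \<sigma>2 \<longrightarrow> C \<sigma>2 \<subseteq> C \<sigma>1"
    and sign: "\<forall>\<sigma>\<in>signvecs n. \<forall>i s. \<sigma> i = Some s \<longrightarrow> (\<forall>y\<in>C \<sigma>. real_of_int s * p y i \<ge> 0)"
  shows "\<exists>y\<in>C Map.empty. \<forall>i\<in>{1..n}. p y i = 0"
proof (cases "n = 0")
  case True
  then show ?thesis
    using conn by (simp add: signvecs_def k_connected_def ex_in_conv)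
next
  case False
  let ?Q = "cube {1..n} (\<lambda>_. 0)"
  obtain f where f: "continuous_map (seq_top ?Q) X f" and carried: "\<And>x. x \<in> ?Q \<Longrightarrow> f x \<in> C (sign_vector n x)"
    using sign_carried_map_on_cube[of n C X] sub conn mono by blast
  have sign_f: "real_of_int s * p (f x) i \<ge> 0" if "x \<in> ?Q" "sign_vector n x i = Some s" for x i s
    using sign sign_vector_in_signvecs carried[OF that(1)] that(2) by blast
  obtain x where "x \<in> ?Q" "\<forall>i\<in>{1..n}. p (f x) i = 0"
  proof (rule poincare_miranda[of "{1..n}" "\<lambda>i x. p (f x) i", THEN bexE])
    show "continuous_map (seq_top ?Q) euclideanreal (\<lambda>x. p (f x) i)" if "i \<in> {1..n}" for i
      using continuous_map_compose[OF f] p_cont that unfolding o_def by blast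
    show "p (f x) i \<ge> 0" if "i \<in> {1..n}" "x \<in> ?Q" "x i = 1" for i x
      using sign_f[of x i 1] that by (simp add: sign_vector_def)
    show "p (f x) i \<le> 0" if "i \<in> {1..n}" "x \<in> ?Q" "x i = -1" for i x
      using sign_f[of x i "-1"] that by (simp add: sign_vector_def)
  qed (use False in auto)
  moreover have "C (sign_vector n x) \<subseteq> C Map.empty"
    using mono sign_vector_in_signvecs by (simp add: signvecs_def map_le_def)
  ultimately show ?thesis
    using carried by blast
qed

end
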